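(* Let $\psi:\mathbb{N}\to[1,\infty)$ be a function with $\psi(n)\to\infty$ and $\log\psi(n)/\log n\to 0$ as $n\to\infty$, and let $d=d(n)$ be positive integers with $d\geq n/\psi(n)$. Then, as $n\to\infty$, $$p_d(n+1)\geq n^{\big(n+\frac{n\log d}{\psi(n)\log n}\big)(1+o(1))},$$ and consequently, if moreover $\frac{\log d}{\psi(n)\log n}\to 0$ as $n\to\infty$, then $p_d(n)\geq n^{n+o(n)}$.
   Context: $\mathbb{Z}_+=\{0,1,2,\dots\}$. A set $S\subset\mathbb{Z}_+^d$ is a lower set if whenever $\mathbf{x}\in S$ and $\mathbf{x}'\in\mathbb{Z}_+^d$ satisfies $x'_i\leq x_i$ for all $i$, then $\mathbf{x}'\in S$. $p_d(n)$ denotes the number of lower sets in $\mathbb{Z}_+^d$ with exactly $n$ points. $\log$ is the natural logarithm. *)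

theory Defs
  imports Complex_Main
begin

text \<open>Points of Z_+^d are represented as functions nat => nat vanishing at all
  coordinates i >= d.\<close>

definition lower_set :: "nat \<Rightarrow> (nat \<Rightarrow> nat) set \<Rightarrow> bool" where
  "lower_set d S \<longleftrightarrow>
     S \<subseteq> {x. \<forall>i\<ge>d. x i = 0} \<and>
     (\<forall>x\<in>S. \<forall>y. (\<forall>i. y i \<le> x i) \<longrightarrow> y \<in> S)"

definition p :: "nat \<Rightarrow> nat \<Rightarrow> nat" where
  "p d n = card {S. lower_set d S \<and> finite S \<and> card S = n}"

end

theory Submission
  imports Defs "HOL-Library.Indicator_Function" "HOL-Real_Asymp.Real_Asymp"
begin

(* The indicator vectors of a down-closed family of subsets of {0, ..., d - 1} form a lower set
   of the same size. Taking the empty set, the k singletons of a k-set K and m of the 2-subsets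
   of K (a graph on K) gives at least C(d, k) C(C(k, 2), m) >= (d / k)^k (C(k, 2) / m)^m lower
   sets with 1 + k + m points. With k = ceil (n / psi) and m = n - k, resp. n - 1 - k, this is
   exp (n ln n + (n / psi) ln d - o(n ln n)), since ln psi = o(ln n). *)

section \<open>Lower sets from down-closed set families\<close>

lemma coord_le_card_lower_set:
  assumes "lower_set d S" "finite S" "x \<in> S"
  shows "x i \<le> card S"
proof -
  let ?axis = "\<lambda>t::nat. (\<lambda>j. if j = i then t else 0)"
  have "?axis ` {..<Suc (x i)} \<subseteq> S"
    using assms unfolding lower_set_def by auto
  moreover have "inj ?axis"
    by (rule injI) (metis (mono_tags))
  ultimately have "card {..<Suc (x i)} \<le> card S"
    using assms(2) by (metis card_image card_mono inj_on_subset subset_UNIV)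
  then show ?thesis by simp
qed

lemma finite_lower_sets_of_card:
  "finite {S. lower_set d S \<and> finite S \<and> card S = N}"
proof -
  define box where
    "box = {x::nat \<Rightarrow> nat.
      \<forall>i. (i \<in> {..<d} \<longrightarrow> x i \<in> {..N}) \<and> (i \<notin> {..<d} \<longrightarrow> x i = 0)}"
  have "S \<subseteq> box" if S: "lower_set d S" "finite S" "card S = N" for S
  proof
    fix x assume "x \<in> S"
    then show "x \<in> box"
      using S coord_le_card_lower_set[OF S(1,2)] unfolding box_def lower_set_def by auto
  qed
  then have "{S. lower_set d S \<and> finite S \<and> card S = N} \<subseteq> Pow box"
    by blast
  moreover have "finite box"
    unfolding box_def by (intro finite_set_of_finite_funs) auto
  ultimately show ?thesis
    by (simp add: finite_subset)
qed

lemma lower_set_indicator_image: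
  assumes "X \<subseteq> Pow {..<d}" and "\<And>A B. A \<in> X \<Longrightarrow> B \<subseteq> A \<Longrightarrow> B \<in> X"
  shows "lower_set d ((\<lambda>A. indicator A :: nat \<Rightarrow> nat) ` X)"
  unfolding lower_set_def
proof (intro conjI ballI allI impI)
  show "(\<lambda>A. indicator A) ` X \<subseteq> {x :: nat \<Rightarrow> nat. \<forall>i\<ge>d. x i = 0}"
  proof clarify
    fix A i assume "A \<in> X" "d \<le> i"
    then have "A \<subseteq> {..<d}"
      using assms(1) by blast
    then have "i \<notin> A"
      using \<open>d \<le> i\<close> by auto
    then show "indicator A i = (0 :: nat)"
      by simp
  qed
next
  fix x y :: "nat \<Rightarrow> nat"
  assume "x \<in> (\<lambda>A. indicator A) ` X" and y_le: "\<forall>i. y i \<le> x i"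
  then obtain A where A: "A \<in> X" "x = indicator A" by auto
  have y_eq: "y = indicator {i. y i \<noteq> 0}"
  proof
    fix i
    have "y i \<le> indicator A i"
      using y_le A(2) by simp
    also have "\<dots> \<le> 1"
      by (rule indicator_le_1)
    finally show "y i = indicator {i. y i \<noteq> 0} i"
      by (auto simp: indicator_def)
  qed
  have support_sub: "{i. y i \<noteq> 0} \<subseteq> A"
  proof
    fix i assume "i \<in> {i. y i \<noteq> 0}"
    then show "i \<in> A"
      using y_le[rule_format, of i] A(2) by (cases "i \<in> A") auto
  qed
  show "y \<in> (\<lambda>A. indicator A) ` X"
    using image_eqI[where f = indicator, OF y_eq assms(2)[OF A(1) support_sub]] .
qed

definition down_closed_families :: "nat \<Rightarrow> nat \<Rightarrow> nat set set set" where
  "down_closed_families d N =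
     {X. X \<subseteq> Pow {..<d} \<and> (\<forall>A\<in>X. \<forall>B\<subseteq>A. B \<in> X) \<and> card X = N}"

lemma inj_indicator_nat: "inj (\<lambda>A. indicator A :: 'a \<Rightarrow> nat)"
proof (rule injI)
  fix A B :: "'a set"
  assume "indicator A = (indicator B :: 'a \<Rightarrow> nat)"
  then show "A = B"
    by (metis (full_types) indicator_eq_0_iff equalityI subsetI zero_neq_one indicator_simps(1))
qed

lemma card_down_closed_families_le_p: "card (down_closed_families d N) \<le> p d N"
proof -
  let ?lower = "\<lambda>X. (\<lambda>A. indicator A :: nat \<Rightarrow> nat) ` X"
  have "?lower ` down_closed_families d N \<subseteq> {S. lower_set d S \<and> finite S \<and> card S = N}"
  proof safe
    fix X assume X: "X \<in> down_closed_families d N"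
    then have "finite X"
      using finite_subset[of X "Pow {..<d}"] by (simp add: down_closed_families_def)
    then show "lower_set d (?lower X)" "finite (?lower X)" "card (?lower X) = N"
      using X lower_set_indicator_image[of X d]
        card_image[OF inj_on_subset[OF inj_indicator_nat subset_UNIV]]
      by (auto simp: down_closed_families_def)
  qed
  moreover have "inj_on ?lower (down_closed_families d N)"
    by (intro inj_onI) (simp add: inj_image_eq_iff[OF inj_indicator_nat])
  ultimately show ?thesis
    unfolding p_def by (intro card_inj_on_le finite_lower_sets_of_card)
qed

section \<open>Counting graphs\<close>

definition graph_complex :: "nat set \<Rightarrow> nat set set \<Rightarrow> nat set set" where
  "graph_complex K E = insert {} ((\<lambda>i. {i}) ` K \<union> E)"

lemma graph_complex_mem_down_closed_families:
  assumes K: "K \<subseteq> {..<d}" "card K = k"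
    and E: "E \<subseteq> {B. B \<subseteq> K \<and> card B = 2}" "card E = m"
  shows "graph_complex K E \<in> down_closed_families d (Suc (k + m))"
proof -
  have "finite K"
    using K(1) by (rule finite_subset) simp
  then have "finite {B. B \<subseteq> K \<and> card B = 2}"
    by simp
  with E(1) have "finite E"
    by (rule finite_subset)
  have down: "B \<in> graph_complex K E" if A: "A \<in> graph_complex K E" and "B \<subseteq> A" for A B
  proof -
    consider "A = {}" | i where "A = {i}" | "A \<in> E"
      using A unfolding graph_complex_def by blast
    then show ?thesis
    proof cases
      case 1
      then show ?thesis
        using \<open>B \<subseteq> A\<close> by (simp add: graph_complex_def)
    next
      case 2
      then show ?thesis
        using A \<open>B \<subseteq> A\<close> by (auto simp: graph_complex_def subset_singleton_iff)
    next
      case 3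
      then have "A \<subseteq> K" "card A = 2"
        using E(1) by auto
      then obtain a b where "A = {a, b}"
        by (meson card_2_iff)
      then have "B = {} \<or> B = {a} \<or> B = {b} \<or> B = A"
        using \<open>B \<subseteq> A\<close> by (cases "a \<in> B"; cases "b \<in> B") auto
      then show ?thesis
        using 3 \<open>A \<subseteq> K\<close> \<open>A = {a, b}\<close> by (auto simp: graph_complex_def)
    qed
  qed
  have "(\<lambda>i. {i}) ` K \<inter> E = {}"
    using E(1) by auto
  then have "card ((\<lambda>i. {i}) ` K \<union> E) = k + m"
    using \<open>finite K\<close> \<open>finite E\<close> K(2) E(2) by (simp add: card_Un_disjoint card_image)
  moreover have "{} \<notin> (\<lambda>i. {i}) ` K \<union> E"
    using E(1) by auto
  ultimately have "card (graph_complex K E) = Suc (k + m)"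
    using \<open>finite K\<close> \<open>finite E\<close> unfolding graph_complex_def by simp
  moreover have "graph_complex K E \<subseteq> Pow {..<d}"
    using K(1) E(1) unfolding graph_complex_def by auto
  ultimately show ?thesis
    using down unfolding down_closed_families_def by blast
qed

lemma inj_on_graph_complex:
  "inj_on (\<lambda>(K, E). graph_complex K E) {(K, E). E \<subseteq> {B. B \<subseteq> K \<and> card B = 2}}"
proof (rule inj_onI, clarify)
  fix K E K' E'
  assume E: "E \<subseteq> {B. B \<subseteq> K \<and> card B = 2}" and E': "E' \<subseteq> {B. B \<subseteq> K' \<and> card B = 2}"
    and eq: "graph_complex K E = graph_complex K' E'"
  have "\<Union> (graph_complex K E) = K" "{B \<in> graph_complex K E. card B = 2} = E"
    using E unfolding graph_complex_def by auto
  moreover have "\<Union> (graph_complex K' E') = K'" "{B \<in> graph_complex K' E'. card B = 2} = E'"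
    using E' unfolding graph_complex_def by auto
  ultimately show "K = K' \<and> E = E'"
    using eq by metis
qed

lemma card_graphs:
  "card (SIGMA K:{K. K \<subseteq> {..<d} \<and> card K = k}. {E. E \<subseteq> {B. B \<subseteq> K \<and> card B = 2} \<and> card E = m})
     = (d choose k) * ((k choose 2) choose m)"
proof -
  let ?Ks = "{K. K \<subseteq> {..<d} \<and> card K = k}"
  let ?Es = "\<lambda>K. {E. E \<subseteq> {B. B \<subseteq> K \<and> card B = 2} \<and> card E = m}"
  have Es: "finite (?Es K) \<and> card (?Es K) = (k choose 2) choose m" if "K \<in> ?Ks" for K
  proof -
    have K: "K \<subseteq> {..<d}" "card K = k"
      using that by auto
    have "finite K"
      using K(1) by (rule finite_subset) simp
    then show ?thesis
      using K(2) by (simp add: n_subsets)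
  qed
  have "card (Sigma ?Ks ?Es) = (\<Sum>K\<in>?Ks. card (?Es K))"
    using Es by (intro card_SigmaI) auto
  also have "\<dots> = (\<Sum>K\<in>?Ks. (k choose 2) choose m)"
    by (rule sum.cong[OF refl]) (use Es in blast)
  also have "\<dots> = (d choose k) * ((k choose 2) choose m)"
    by (simp add: n_subsets)
  finally show ?thesis .
qed

lemma binomial_product_le_p: "(d choose k) * ((k choose 2) choose m) \<le> p d (Suc (k + m))"
proof -
  let ?graphs = "SIGMA K:{K. K \<subseteq> {..<d} \<and> card K = k}.
                   {E. E \<subseteq> {B. B \<subseteq> K \<and> card B = 2} \<and> card E = m}"
  have "inj_on (\<lambda>(K, E). graph_complex K E) ?graphs"
    by (rule inj_on_subset[OF inj_on_graph_complex]) auto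
  moreover have "(\<lambda>(K, E). graph_complex K E) ` ?graphs \<subseteq> down_closed_families d (Suc (k + m))"
    using graph_complex_mem_down_closed_families by auto
  moreover have "finite (down_closed_families d (Suc (k + m)))"
    unfolding down_closed_families_def by (rule finite_subset[of _ "Pow (Pow {..<d})"]) auto
  ultimately have "card ?graphs \<le> card (down_closed_families d (Suc (k + m)))"
    by (rule card_inj_on_le)
  then show ?thesis
    using card_graphs card_down_closed_families_le_p order_trans by metis
qed

lemma exp_le_p:
  assumes "1 \<le> k" "k \<le> d" "1 \<le> m" "m \<le> k choose 2"
  shows "exp (k * ln (d / k) + m * ln ((k choose 2) / m)) \<le> p d (Suc (k + m))"
proof -
  have "0 < k choose 2"
    using assms(3,4) by linarith
  then have pos: "0 < real d / k" "0 < real (k choose 2) / m"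
    using assms by auto
  have "exp (k * ln (d / k) + m * ln ((k choose 2) / m)) = (real d / k) ^ k * (real (k choose 2) / m) ^ m"
    using pos by (simp add: exp_add exp_of_nat_mult)
  also have "\<dots> \<le> real (d choose k) * real ((k choose 2) choose m)"
    using assms pos by (intro mult_mono binomial_ge_n_over_k_pow_k) auto
  also have "\<dots> \<le> p d (Suc (k + m))"
    using binomial_product_le_p by (metis of_nat_le_iff of_nat_mult)
  finally show ?thesis .
qed

section \<open>The estimate for fixed n\<close>

lemma real_choose_two: "real (k choose 2) = real k * (real k - 1) / 2"
proof -
  have "real (k choose 2) = real (k - 1) * k / 2"
    by (auto simp: choose_two field_char_0_class.of_nat_div mod_eq_0_iff_dvd)
  then show ?thesis
    by (cases k) (auto simp: algebra_simps)
qed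

lemma graph_parameters:
  fixes x :: real and n N d :: nat
  assumes "0 < x" "16 * n \<le> x\<^sup>2" "2 * x \<le> n" "x \<le> d" "n \<le> N" "N \<le> n + 1"
  obtains k m where "Suc (k + m) = N" "x \<le> k" "k \<le> x + 1" "1 \<le> k" "k \<le> d" "k \<le> n"
    "n - x - 2 \<le> m" "1 \<le> m" "m \<le> k choose 2" "x\<^sup>2 / (4 * n) \<le> (k choose 2) / m"
proof -
  define k where "k = nat \<lceil>x\<rceil>"
  define m where "m = N - Suc k"
  have "32 * x \<le> x\<^sup>2"
    using assms(2,3) by linarith
  then have "32 \<le> x"
    using \<open>0 < x\<close> by (simp add: power2_eq_square)
  have k: "x \<le> k" "k \<le> x + 1"
    unfolding k_def using \<open>0 < x\<close> by linarith+
  have "k \<le> d"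
    unfolding k_def using assms(4) by (simp add: nat_le_iff ceiling_le)
  have choose: "x\<^sup>2 / 4 \<le> k choose 2"
  proof -
    have "x * (x / 2) \<le> real k * (real k - 1)"
      using k \<open>32 \<le> x\<close> by (intro mult_mono) auto
    then show ?thesis
      by (simp add: real_choose_two power2_eq_square)
  qed
  have "real (Suc k) \<le> real n"
    using k \<open>32 \<le> x\<close> assms(3) by simp
  then have "Suc k \<le> N"
    using assms(5) by linarith
  then have "Suc (k + m) = N" and m: "real m = real N - k - 1"
    unfolding m_def by (simp_all add: of_nat_diff)
  have m_bounds: "n - x - 2 \<le> m" "m \<le> n"
    using m k assms(5,6) by linarith+
  then have "1 \<le> m"
    using \<open>32 \<le> x\<close> assms(3) by linarith
  moreover have "m \<le> k choose 2"
    using m_bounds(2) choose assms(2) by linarith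
  moreover have "x\<^sup>2 / (4 * n) \<le> (k choose 2) / m"
    using choose \<open>1 \<le> m\<close> m_bounds(2) \<open>0 < x\<close> by (simp add: frac_le flip: divide_divide_eq_left)
  ultimately show ?thesis
    using that k m_bounds \<open>Suc (k + m) = N\<close> \<open>0 < x\<close> \<open>k \<le> d\<close> \<open>real (Suc k) \<le> real n\<close>
    by simp
qed

lemma mult_ln_div_ge:
  fixes x :: real and k d n :: nat
  assumes "x \<le> k" "k \<le> x + 1" "1 \<le> k" "k \<le> d" "k \<le> n"
  shows "x * ln d - (x + 1) * ln n \<le> k * ln (d / k)"
proof -
  have "x * ln d \<le> k * ln d"
    using assms by (intro mult_right_mono) auto
  moreover have "k * ln k \<le> (x + 1) * ln n"
    using assms by (intro mult_mono) auto
  ultimately show ?thesis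
    using assms by (simp add: ln_div right_diff_distrib)
qed

(* With x = n / psi: k ln (d / k) loses (x + 1) ln n against x ln d, and m ln (C(k, 2) / m) loses
   (x + 2) ln n + n ln (4 psi^2) against n ln n. *)
definition graph_count_loss :: "real \<Rightarrow> nat \<Rightarrow> real" where
  "graph_count_loss \<psi> n = (2 * n / \<psi> + 3) * ln n + n * ln (4 * \<psi>\<^sup>2)"

lemma graph_count_loss_nonneg:
  assumes "1 \<le> \<psi>"
  shows "0 \<le> graph_count_loss \<psi> n"
proof -
  have "1 \<le> \<psi>\<^sup>2"
    using assms by (rule one_le_power)
  then have "0 \<le> ln (4 * \<psi>\<^sup>2)"
    by simp
  moreover have "0 \<le> ln (real n)"
    by (cases n) auto
  ultimately show ?thesis
    using assms unfolding graph_count_loss_def by (intro add_nonneg_nonneg mult_nonneg_nonneg) auto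
qed

lemma exp_le_p_near_n:
  fixes n N d :: nat and \<psi> :: real
  assumes psi: "2 \<le> \<psi>" "16 * \<psi>\<^sup>2 \<le> n" and d: "n / \<psi> \<le> d" and N: "n \<le> N" "N \<le> n + 1"
  shows "exp (n * ln n + n * ln d / \<psi> - graph_count_loss \<psi> n) \<le> p d N"
proof -
  define x where "x = n / \<psi>"
  define L where "L = ln (4 * \<psi>\<^sup>2)"
  have "0 < \<psi>" "4 \<le> \<psi>\<^sup>2"
    using psi(1) power_mono[OF psi(1), of 2] by simp_all
  then have "64 \<le> real n" "0 \<le> L"
    using psi(2) by (auto simp: L_def)
  have "0 < x" "2 * x \<le> n"
    using psi \<open>64 \<le> real n\<close> by (auto simp: x_def field_simps)
  have "16 * n \<le> x\<^sup>2"
    using mult_left_mono[OF psi(2), of n] psi(1) by (simp add: x_def power_divide field_simps power2_eq_square)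
  then obtain k m where km: "Suc (k + m) = N" "x \<le> k" "k \<le> x + 1" "1 \<le> k" "k \<le> d" "k \<le> n"
    "n - x - 2 \<le> m" "1 \<le> m" "m \<le> k choose 2" "x\<^sup>2 / (4 * n) \<le> (k choose 2) / m"
    using graph_parameters[OF \<open>0 < x\<close> _ \<open>2 * x \<le> n\<close> _ N] d unfolding x_def by blast
  have "x\<^sup>2 / (4 * n) = n / (4 * \<psi>\<^sup>2)" "4 \<le> n / (4 * \<psi>\<^sup>2)"
    using psi \<open>0 < \<psi>\<close> \<open>64 \<le> real n\<close>
    by (simp_all add: x_def power_divide field_simps power2_eq_square)
  moreover have "ln n - L = ln (n / (4 * \<psi>\<^sup>2))"
    using \<open>0 < \<psi>\<close> \<open>64 \<le> real n\<close> by (simp add: L_def ln_div)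
  ultimately have "0 \<le> ln n - L" "ln n - L \<le> ln (real (k choose 2) / m)"
    using km(10) by auto
  then have m_part: "(n - x - 2) * (ln n - L) \<le> m * ln (real (k choose 2) / m)"
    using km(7) by (meson mult_mono of_nat_0_le_iff order_trans)
  have "n * ln n + n * ln d / \<psi> - graph_count_loss \<psi> n
      = x * ln d - (x + 1) * ln n + (n - x - 2) * (ln n - L) - (x + 2) * L"
    by (simp add: graph_count_loss_def x_def L_def algebra_simps)
  also have "\<dots> \<le> k * ln (d / k) + m * ln (real (k choose 2) / m)"
    using mult_ln_div_ge[OF km(2-6)] m_part mult_nonneg_nonneg[of "x + 2" L] \<open>0 < x\<close> \<open>0 \<le> L\<close>
    by linarith
  finally show ?thesis
    using exp_le_p[OF km(4,5,8,9)] km(1) by (metis exp_le_cancel_iff order_trans)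
qed

section \<open>Asymptotics\<close>

lemma eventually_mult_power2_le_of_ln_ratio:
  fixes \<psi> :: "nat \<Rightarrow> real"
  assumes slow: "(\<lambda>n. ln (\<psi> n) / ln n) \<longlonglongrightarrow> 0" and pos: "\<And>n. 0 < \<psi> n" and "0 < c"
  shows "\<forall>\<^sub>F n in sequentially. c * (\<psi> n)\<^sup>2 \<le> n"
proof -
  have "(\<lambda>n. ln c / ln (real n)) \<longlonglongrightarrow> 0"
    by real_asymp
  then have "(\<lambda>n. ln c / ln n + 2 * (ln (\<psi> n) / ln n)) \<longlonglongrightarrow> 0 + 2 * 0"
    by (intro tendsto_intros slow)
  then have "\<forall>\<^sub>F n in sequentially. ln c / ln n + 2 * (ln (\<psi> n) / ln n) < 1"
    by (rule order_tendstoD) simp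
  with eventually_ge_at_top[of 2] show ?thesis
  proof eventually_elim
    case (elim n)
    then have "ln c + 2 * ln (\<psi> n) < ln n"
      by (simp add: field_simps)
    then have "ln (c * (\<psi> n)\<^sup>2) < ln n"
      using pos[of n] \<open>0 < c\<close> by (simp add: ln_mult ln_realpow)
    then show ?case
      using pos[of n] \<open>0 < c\<close> elim(1) by (simp add: ln_less_cancel_iff)
  qed
qed

lemma powr_bound_of_exp_bound:
  fixes P B err :: "nat \<Rightarrow> real"
  assumes err: "(\<lambda>n. err n / (n * ln n)) \<longlonglongrightarrow> 0"
    and bound: "\<forall>\<^sub>F n in sequentially. 0 \<le> B n \<and> 0 \<le> err n \<and> exp (n * ln n + B n - err n) \<le> P n"
  shows "\<exists>\<epsilon> :: nat \<Rightarrow> real. \<epsilon> \<longlonglongrightarrow> 0 \<and>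
    (\<forall>\<^sub>F n in sequentially. n powr ((n + B n / ln n) * (1 + \<epsilon> n)) \<le> P n)"
proof (intro exI conjI)
  \<comment> \<open>This choice makes the exponent exactly \<open>(n * ln n + B n - err n) / ln n\<close>.\<close>
  define \<epsilon> where "\<epsilon> n = - err n / (n * ln n + B n)" for n
  have bound': "\<forall>\<^sub>F n in sequentially.
      0 < n * ln n \<and> 0 \<le> B n \<and> 0 \<le> err n \<and> exp (n * ln n + B n - err n) \<le> P n"
    using bound eventually_ge_at_top[of 2] by eventually_elim simp
  show "\<epsilon> \<longlonglongrightarrow> 0"
  proof (rule tendsto_sandwich[where f = "\<lambda>n. - (err n / (n * ln n))" and h = "\<lambda>_. 0"])
    show "\<forall>\<^sub>F n in sequentially. - (err n / (n * ln n)) \<le> \<epsilon> n"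
      using bound' by eventually_elim (auto simp: \<epsilon>_def intro!: frac_le)
    show "\<forall>\<^sub>F n in sequentially. \<epsilon> n \<le> 0"
      using bound' by eventually_elim (simp add: \<epsilon>_def)
    show "(\<lambda>n. - (err n / (n * ln n))) \<longlonglongrightarrow> 0"
      using tendsto_minus[OF err] by simp
  qed simp
  show "\<forall>\<^sub>F n in sequentially. n powr ((n + B n / ln n) * (1 + \<epsilon> n)) \<le> P n"
    using bound' eventually_ge_at_top[of 2]
  proof eventually_elim
    case (elim n)
    have "0 < ln n" "0 < n * ln n"
      using elim(2) by auto
    then have nz: "n * ln n + B n \<noteq> 0" "ln n \<noteq> 0"
      using elim(1) by auto
    have "n + B n / ln n = (n * ln n + B n) / ln n"
      using nz by (simp add: field_simps)
    moreover have "1 + \<epsilon> n = (n * ln n + B n - err n) / (n * ln n + B n)"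
      using nz by (simp add: \<epsilon>_def field_simps)
    ultimately have "(n + B n / ln n) * (1 + \<epsilon> n) = (n * ln n + B n - err n) / ln n"
      using nz by simp
    then have "n powr ((n + B n / ln n) * (1 + \<epsilon> n)) = exp (n * ln n + B n - err n)"
      using elim by (simp add: powr_def)
    then show ?case
      using elim by simp
  qed
qed

lemma powr_self_bound_of_exp_bound:
  fixes P B err :: "nat \<Rightarrow> real"
  assumes err: "(\<lambda>n. err n / (n * ln n)) \<longlonglongrightarrow> 0"
    and bound: "\<forall>\<^sub>F n in sequentially. 0 \<le> B n \<and> 0 \<le> err n \<and> exp (n * ln n + B n - err n) \<le> P n"
  shows "\<exists>\<epsilon> :: nat \<Rightarrow> real. \<epsilon> \<longlonglongrightarrow> 0 \<and>
    (\<forall>\<^sub>F n in sequentially. n powr (n + \<epsilon> n * n) \<le> P n)"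
proof -
  have "\<forall>\<^sub>F n in sequentially. 0 \<le> (0::real) \<and> 0 \<le> err n \<and> exp (n * ln n + 0 - err n) \<le> P n"
    using bound
  proof (rule eventually_mono)
    fix n
    assume "0 \<le> B n \<and> 0 \<le> err n \<and> exp (n * ln n + B n - err n) \<le> P n"
    moreover from this have "exp (n * ln n + 0 - err n) \<le> exp (n * ln n + B n - err n)"
      by simp
    ultimately show "0 \<le> (0::real) \<and> 0 \<le> err n \<and> exp (n * ln n + 0 - err n) \<le> P n"
      by linarith
  qed
  from powr_bound_of_exp_bound[OF err this] show ?thesis
    by (simp add: algebra_simps)
qed

lemma graph_count_loss_small:
  fixes \<psi> :: "nat \<Rightarrow> real"
  assumes psi_ge1: "\<And>n. 1 \<le> \<psi> n" and psi_inf: "filterlim \<psi> at_top sequentially"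
    and psi_slow: "(\<lambda>n. ln (\<psi> n) / ln n) \<longlonglongrightarrow> 0"
  shows "(\<lambda>n. graph_count_loss (\<psi> n) n / (n * ln n)) \<longlonglongrightarrow> 0"
proof -
  have "(\<lambda>n. 3 / real n) \<longlonglongrightarrow> 0" "(\<lambda>n. ln 4 / ln (real n)) \<longlonglongrightarrow> 0"
    by real_asymp+
  then have "(\<lambda>n. 2 * inverse (\<psi> n) + 3 / n + ln 4 / ln n + 2 * (ln (\<psi> n) / ln n))
      \<longlonglongrightarrow> 2 * 0 + 0 + 0 + 2 * 0"
    by (intro tendsto_intros tendsto_inverse_0_at_top[OF psi_inf] psi_slow)
  moreover have "\<forall>\<^sub>F n in sequentially. 2 * inverse (\<psi> n) + 3 / n + ln 4 / ln n + 2 * (ln (\<psi> n) / ln n)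
      = graph_count_loss (\<psi> n) n / (n * ln n)"
    using eventually_ge_at_top[of 2]
  proof eventually_elim
    case (elim n)
    have "0 < \<psi> n"
      using psi_ge1[of n] by linarith
    with elim show ?case
      by (simp add: graph_count_loss_def ln_mult ln_realpow field_simps)
  qed
  ultimately show ?thesis
    by (simp add: Lim_transform_eventually)
qed

lemma eventually_exp_le_p:
  fixes \<psi> :: "nat \<Rightarrow> real" and d N :: "nat \<Rightarrow> nat"
  assumes psi_ge1: "\<And>n. 1 \<le> \<psi> n" and psi_inf: "filterlim \<psi> at_top sequentially"
    and psi_slow: "(\<lambda>n. ln (\<psi> n) / ln n) \<longlonglongrightarrow> 0"
    and d: "\<And>n. 1 \<le> d n" "\<And>n. n / \<psi> n \<le> d n" and N: "\<And>n. n \<le> N n" "\<And>n. N n \<le> n + 1"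
  shows "\<forall>\<^sub>F n in sequentially. 0 \<le> n * ln (d n) / \<psi> n \<and> 0 \<le> graph_count_loss (\<psi> n) n \<and>
    exp (n * ln n + n * ln (d n) / \<psi> n - graph_count_loss (\<psi> n) n) \<le> p (d n) (N n)"
proof -
  have psi_pos: "0 < \<psi> n" for n
    using psi_ge1[of n] by linarith
  have "\<forall>\<^sub>F n in sequentially. 2 \<le> \<psi> n"
    using psi_inf by (simp add: filterlim_at_top)
  moreover have "\<forall>\<^sub>F n in sequentially. 16 * (\<psi> n)\<^sup>2 \<le> n"
    by (rule eventually_mult_power2_le_of_ln_ratio[OF psi_slow psi_pos]) simp
  ultimately show ?thesis
  proof eventually_elim
    case (elim n)
    then show ?case
      using exp_le_p_near_n[of "\<psi> n" n "d n" "N n"] graph_count_loss_nonneg[OF psi_ge1]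
        d[of n] N[of n] psi_pos[of n]
      by auto
  qed
qed

theorem proposition3:
  fixes \<psi> :: "nat \<Rightarrow> real" and d :: "nat \<Rightarrow> nat"
  assumes psi_ge1: "\<And>n. \<psi> n \<ge> 1"
    and psi_inf: "filterlim \<psi> at_top sequentially"
    and psi_slow: "(\<lambda>n. ln (\<psi> n) / ln (real n)) \<longlonglongrightarrow> 0"
    and d_pos: "\<And>n. d n \<ge> 1"
    and d_ge: "\<And>n. real (d n) \<ge> real n / \<psi> n"
  shows "(\<exists>\<epsilon> :: nat \<Rightarrow> real. \<epsilon> \<longlonglongrightarrow> 0 \<and>
           (\<forall>\<^sub>F n in sequentially.
              real (p (d n) (n + 1)) \<ge>
                real n powr ((real n + real n * ln (real (d n)) / (\<psi> n * ln (real n)))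
                             * (1 + \<epsilon> n))))
       \<and> ((\<lambda>n. ln (real (d n)) / (\<psi> n * ln (real n))) \<longlonglongrightarrow> 0 \<longrightarrow>
          (\<exists>\<epsilon> :: nat \<Rightarrow> real. \<epsilon> \<longlonglongrightarrow> 0 \<and>
           (\<forall>\<^sub>F n in sequentially.
              real (p (d n) n) \<ge> real n powr (real n + \<epsilon> n * real n))))"
proof -
  define B where "B n = n * ln (d n) / \<psi> n" for n
  note bound = eventually_exp_le_p[OF psi_ge1 psi_inf psi_slow d_pos d_ge, folded B_def]
  note loss_small = graph_count_loss_small[OF psi_ge1 psi_inf psi_slow]
  obtain \<epsilon> :: "nat \<Rightarrow> real" where "\<epsilon> \<longlonglongrightarrow> 0"
    and "\<forall>\<^sub>F n in sequentially. n powr ((n + B n / ln n) * (1 + \<epsilon> n)) \<le> p (d n) (n + 1)"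
    using powr_bound_of_exp_bound[OF loss_small bound[of "\<lambda>n. n + 1"]] by auto
  moreover
  obtain \<epsilon>' :: "nat \<Rightarrow> real" where "\<epsilon>' \<longlonglongrightarrow> 0"
    and "\<forall>\<^sub>F n in sequentially. n powr (n + \<epsilon>' n * n) \<le> p (d n) n"
    using powr_self_bound_of_exp_bound[OF loss_small bound[of "\<lambda>n. n"]] by auto
  ultimately show ?thesis
    by (auto simp: B_def)
qed

end
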